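(* Let $K\subseteq\mathbb{Z}^{S}$ be an M-convex set on a finite ground-set $S$ and let $m$ be a decreasingly minimal element of $K$. Then every decreasingly minimal element of $K$ can be obtained from $m$ by a sequence of at most $|S|$ elementary steps.
   Context: An M-convex set is the set of integral points of an integral base-polyhedron. An element of $K$ is decreasingly minimal if its largest component is as small as possible, within this its second largest as small as possible, and so on. For a decreasingly minimal $m\in K$, an elementary step replaces $m$ by $m'=m+\chi_s-\chi_t$, where $s,t\in S$, $m'\in K$ and $m(t)=m(s)+1$ ($\chi_v$ the unit vector of $v$); the result is again decreasingly minimal. *)

theory Defs
  imports "HOL-Library.Extended_Real" "HOL-Library.Multiset" "HOL-Library.List_Lexorder"
begin

text \<open>Ground set S is modelled by a finite type 'a; vectors in Z^S are functions 'a => int.\<close>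

definition integral_submodular :: "('a::finite set \<Rightarrow> ereal) \<Rightarrow> bool" where
  "integral_submodular b \<longleftrightarrow>
     b {} = 0 \<and> (\<exists>k::int. b UNIV = ereal (of_int k)) \<and>
     (\<forall>X. b X = \<infinity> \<or> (\<exists>k::int. b X = ereal (of_int k))) \<and>
     (\<forall>X Y. b (X \<inter> Y) + b (X \<union> Y) \<le> b X + b Y)"

definition base_points :: "('a::finite set \<Rightarrow> ereal) \<Rightarrow> ('a \<Rightarrow> int) set" where
  "base_points b = {x. (\<forall>Z. ereal (of_int (sum x Z)) \<le> b Z) \<and>
                        ereal (of_int (sum x UNIV)) = b UNIV}"

definition M_convex :: "('a::finite \<Rightarrow> int) set \<Rightarrow> bool" where
  "M_convex K \<longleftrightarrow> (\<exists>b. integral_submodular b \<and> K = base_points b)"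

definition dec_vec :: "('a::finite \<Rightarrow> int) \<Rightarrow> int list" where
  "dec_vec x = rev (sorted_list_of_multiset (image_mset x (mset_set UNIV)))"

definition dec_min :: "('a::finite \<Rightarrow> int) set \<Rightarrow> ('a \<Rightarrow> int) \<Rightarrow> bool" where
  "dec_min K m \<longleftrightarrow> m \<in> K \<and>
     (\<forall>y\<in>K. (dec_vec y, dec_vec m) \<notin> lexord {(a, b). a < b})"

definition unit_vec :: "'a \<Rightarrow> 'a \<Rightarrow> int" where
  "unit_vec v = (\<lambda>u. if u = v then 1 else 0)"

definition elem_step :: "('a::finite \<Rightarrow> int) set \<Rightarrow> ('a \<Rightarrow> int) \<Rightarrow> ('a \<Rightarrow> int) \<Rightarrow> bool" where
  "elem_step K m m' \<longleftrightarrow> dec_min K m \<and>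
     (\<exists>s t. m' = (\<lambda>u. m u + unit_vec s u - unit_vec t u) \<and> m' \<in> K \<and> m t = m s + 1)"

end

(*
  An M-convex set K satisfies the exchange axiom: for x, y in K with y u < x u there is v with
  x v < y v such that both x + chi v - chi u and y + chi u - chi v lie in K (chi the unit vectors).
  For K the integral points of a base polyhedron, tight sets of a point are closed under union and
  intersection; take D the least y-tight set containing u and Z the largest x-tight set avoiding u.
  Submodularity gives x(D - Z) <= y(D - Z), so some v in D - Z has x v < y v, and no tight set
  blocks either shift.
  A decreasingly minimal m admits no step m + chi s - chi t in K with m t >= m s + 2.
  For two dec-min elements m and m' with m' u < m u, applying the exchange and this fact to both
  gives m' u + 1 <= m u <= m v + 1 <= m' v <= m' u + 1, so all are equalities: m + chi v - chi u is an
  elementary step that just swaps the values at u and v (hence is again dec-min) and agrees with m'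
  at u. Every step therefore shrinks the set where the current element differs from m'.
*)
theory Submission
  imports Defs
begin

abbreviation unit_shift :: "('a \<Rightarrow> int) \<Rightarrow> 'a \<Rightarrow> 'a \<Rightarrow> 'a \<Rightarrow> int" where
  "unit_shift x s t \<equiv> (\<lambda>w. x w + unit_vec s w - unit_vec t w)"

lemma sorted_list_of_multiset_split:
  fixes A :: "'a::linorder multiset"
  shows "sorted_list_of_multiset A =
    sorted_list_of_multiset (filter_mset (\<lambda>w. w < a) A) @ replicate (count A a) a @
    sorted_list_of_multiset (filter_mset (\<lambda>w. a < w) A)" (is "_ = ?L")
proof -
  have "mset ?L = A"
    by (rule multiset_eqI) (auto simp: count_replicate_mset)
  moreover have "sorted ?L"
    by (auto simp: sorted_append)
  ultimately show ?thesis
    by (metis sorted_list_of_multiset_mset sorted_sort_id)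
qed

lemma lexord_rev_sorted_list_of_multiset:
  fixes A B :: "'a::linorder multiset"
  assumes above: "filter_mset (\<lambda>w. a < w) A = filter_mset (\<lambda>w. a < w) B"
    and count: "count A a < count B a"
  shows "(rev (sorted_list_of_multiset A), rev (sorted_list_of_multiset B)) \<in> lexord {(x, y). x < y}"
proof -
  define H where "H = rev (sorted_list_of_multiset (filter_mset (\<lambda>w. a < w) A)) @ replicate (count A a) a"
  define LA where "LA = rev (sorted_list_of_multiset (filter_mset (\<lambda>w. w < a) A))"
  define LB where "LB = rev (sorted_list_of_multiset (filter_mset (\<lambda>w. w < a) B))"
  obtain d where d: "count B a = count A a + Suc d"
    using count by (metis add_Suc_right less_imp_Suc_add)
  have A_eq: "rev (sorted_list_of_multiset A) = H @ LA"
    using sorted_list_of_multiset_split[of A a] by (simp add: H_def LA_def)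
  have "rev (sorted_list_of_multiset B) =
      rev (sorted_list_of_multiset (filter_mset (\<lambda>w. a < w) B)) @ replicate (count B a) a @ LB"
    using sorted_list_of_multiset_split[of B a] by (simp add: LB_def)
  also have "replicate (count B a) a = replicate (count A a) a @ a # replicate d a"
    unfolding d replicate_add by (simp add: replicate_app_Cons_same)
  finally have B_eq: "rev (sorted_list_of_multiset B) = H @ a # replicate d a @ LB"
    by (simp add: H_def above)
  have "(LA, a # replicate d a @ LB) \<in> lexord {(x, y). x < y}"
  proof (cases LA)
    case Nil
    then show ?thesis by (simp only: lexord_Nil_left) blast
  next
    case (Cons c _)
    then have "c \<in> set LA" by simp
    then have "c < a" by (simp add: LA_def)
    with Cons show ?thesis by (simp only: lexord_cons_cons) simp
  qed
  then show ?thesis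
    unfolding A_eq B_eq by (rule lexord_append_leftI)
qed

lemma dec_vec_lexord_less:
  fixes f g :: "'a::finite \<Rightarrow> int"
  assumes agree: "\<And>z. a < f z \<or> a < g z \<Longrightarrow> f z = g z"
    and fewer: "card {z. f z = a} < card {z. g z = a}"
  shows "(dec_vec f, dec_vec g) \<in> lexord {(x, y). x < y}"
  unfolding dec_vec_def
proof (rule lexord_rev_sorted_list_of_multiset)
  have above: "{z. a < f z} = {z. a < g z}"
  proof (rule Collect_cong)
    fix z
    show "a < f z \<longleftrightarrow> a < g z"
      using agree[of z] by auto
  qed
  have "image_mset f (mset_set {z. a < f z}) = image_mset g (mset_set {z. a < g z})"
    unfolding above by (rule image_mset_cong) (use agree in auto)
  then show "filter_mset ((<) a) (image_mset f (mset_set UNIV)) =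
      filter_mset ((<) a) (image_mset g (mset_set UNIV))"
    by (simp add: filter_mset_image_mset)
  show "count (image_mset f (mset_set UNIV)) a < count (image_mset g (mset_set UNIV)) a"
    using fewer by (simp add: count_image_mset vimage_def)
qed

lemma dec_vec_comp_bij:
  fixes m :: "'a::finite \<Rightarrow> int"
  assumes "bij \<sigma>"
  shows "dec_vec (m \<circ> \<sigma>) = dec_vec m"
proof -
  have "image_mset (m \<circ> \<sigma>) (mset_set UNIV) = image_mset m (image_mset \<sigma> (mset_set UNIV))"
    by (simp add: multiset.map_comp)
  also have "image_mset \<sigma> (mset_set UNIV) = mset_set UNIV"
    using assms by (simp add: image_mset_mset_set bij_is_inj bij_is_surj)
  finally have "image_mset (m \<circ> \<sigma>) (mset_set UNIV) = image_mset m (mset_set UNIV)" .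
  then show ?thesis
    unfolding dec_vec_def by (simp only:)
qed

lemma Inter_mem_Int_closed:
  assumes "finite F" and "F \<noteq> {}" and closed: "\<And>A B. A \<in> F \<Longrightarrow> B \<in> F \<Longrightarrow> A \<inter> B \<in> F"
  shows "\<Inter>F \<in> F"
proof -
  have "G \<subseteq> F \<Longrightarrow> \<Inter>G \<in> F" if "finite G" and "G \<noteq> {}" for G
    using that by (induction G rule: finite_ne_induct) (auto intro: closed)
  then show ?thesis
    using assms(1,2) by blast
qed

lemma Union_mem_Un_closed:
  assumes "finite F" and "F \<noteq> {}" and closed: "\<And>A B. A \<in> F \<Longrightarrow> B \<in> F \<Longrightarrow> A \<union> B \<in> F"
  shows "\<Union>F \<in> F"
proof -
  have "G \<subseteq> F \<Longrightarrow> \<Union>G \<in> F" if "finite G" and "G \<noteq> {}" for G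
    using that by (induction G rule: finite_ne_induct) (auto intro: closed)
  then show ?thesis
    using assms(1,2) by blast
qed

definition tight :: "('a::finite set \<Rightarrow> ereal) \<Rightarrow> ('a \<Rightarrow> int) \<Rightarrow> 'a set \<Rightarrow> bool" where
  "tight b x Z \<longleftrightarrow> ereal (of_int (sum x Z)) = b Z"

lemma integral_submodularD:
  assumes "integral_submodular b"
  shows "b {} = 0"
    and "b X = \<infinity> \<or> (\<exists>k::int. b X = ereal (of_int k))"
    and "b (X \<inter> Y) + b (X \<union> Y) \<le> b X + b Y"
  using assms unfolding integral_submodular_def by blast+

lemma base_points_sum_le: "x \<in> base_points b \<Longrightarrow> ereal (of_int (sum x Z)) \<le> b Z"
  unfolding base_points_def by blast

lemma base_points_tight_UNIV: "x \<in> base_points b \<Longrightarrow> tight b x UNIV"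
  unfolding base_points_def tight_def by blast

lemma tight_empty: "integral_submodular b \<Longrightarrow> tight b x {}"
  by (simp add: tight_def integral_submodularD(1) zero_ereal_def)

lemma tight_Un_Int:
  assumes b: "integral_submodular b" and x: "x \<in> base_points b"
    and A: "tight b x A" and B: "tight b x B"
  shows "tight b x (A \<union> B) \<and> tight b x (A \<inter> B)"
proof -
  have "b (A \<inter> B) + b (A \<union> B) \<le> b A + b B"
    by (rule integral_submodularD(3)[OF b])
  also have "\<dots> = ereal (of_int (sum x A)) + ereal (of_int (sum x B))"
    using A B by (simp add: tight_def)
  also have "\<dots> = ereal (of_int (sum x (A \<inter> B))) + ereal (of_int (sum x (A \<union> B)))"
    using sum.union_inter[of A B x] by (simp del: of_int_sum flip: of_int_add add: add.commute)
  finally show ?thesis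
    using base_points_sum_le[OF x, of "A \<inter> B"] base_points_sum_le[OF x, of "A \<union> B"]
    unfolding tight_def by (cases "b (A \<inter> B)"; cases "b (A \<union> B)") auto
qed

lemma base_points_sum_Diff_le:
  assumes b: "integral_submodular b" and x: "x \<in> base_points b" and y: "y \<in> base_points b"
    and D: "tight b y D" and Z: "tight b x Z"
  shows "sum x (D - Z) \<le> sum y (D - Z)"
proof -
  have "ereal (of_int (sum y (D \<inter> Z))) + ereal (of_int (sum x (D \<union> Z))) \<le> b (D \<inter> Z) + b (D \<union> Z)"
    by (intro add_mono base_points_sum_le x y)
  also have "\<dots> \<le> b D + b Z"
    by (rule integral_submodularD(3)[OF b])
  also have "\<dots> = ereal (of_int (sum y D)) + ereal (of_int (sum x Z))"
    using D Z by (simp add: tight_def)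
  finally have "sum y (D \<inter> Z) + sum x (D \<union> Z) \<le> sum y D + sum x Z"
    by (simp del: of_int_sum flip: of_int_add)
  moreover have "sum x (D \<union> Z) + sum x (D \<inter> Z) = sum x D + sum x Z"
    by (simp add: sum.union_inter)
  moreover have "sum x D = sum x (D \<inter> Z) + sum x (D - Z)" and "sum y D = sum y (D \<inter> Z) + sum y (D - Z)"
    by (simp_all add: sum.Int_Diff)
  ultimately show ?thesis
    by linarith
qed

lemma sum_unit_shift:
  "sum (unit_shift x s t) Z = sum x Z + (if s \<in> Z then 1 else 0) - (if t \<in> Z then 1 else 0)"
  for x :: "'a::finite \<Rightarrow> int"
  by (simp add: sum.distrib sum_subtractf unit_vec_def)

lemma unit_shift_in_base_points:
  assumes b: "integral_submodular b" and x: "x \<in> base_points b"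
    and not_tight: "\<And>Z. s \<in> Z \<Longrightarrow> t \<notin> Z \<Longrightarrow> \<not> tight b x Z"
  shows "unit_shift x s t \<in> base_points b"
  unfolding base_points_def
proof (intro CollectI conjI allI)
  fix Z :: "'a set"
  show "ereal (of_int (sum (unit_shift x s t) Z)) \<le> b Z"
  proof (cases "s \<in> Z \<and> t \<notin> Z")
    case True
    then have "ereal (of_int (sum x Z)) < b Z"
      using base_points_sum_le[OF x, of Z] not_tight by (auto simp: tight_def order_less_le)
    then have "ereal (of_int (sum x Z + 1)) \<le> b Z"
      using integral_submodularD(2)[OF b, of Z] by (auto simp del: of_int_sum)
    then show ?thesis
      using True by (simp add: sum_unit_shift)
  next
    case False
    then have "sum (unit_shift x s t) Z \<le> sum x Z"
      by (auto simp: sum_unit_shift)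
    then show ?thesis
      using base_points_sum_le[OF x, of Z] by (meson ereal_less_eq(3) of_int_le_iff order_trans)
  qed
next
  show "ereal (of_int (sum (unit_shift x s t) UNIV)) = b UNIV"
    using base_points_tight_UNIV[OF x] by (simp add: sum_unit_shift tight_def)
qed

lemma base_points_exchange:
  assumes b: "integral_submodular b" and x: "x \<in> base_points b" and y: "y \<in> base_points b"
    and u: "y u < x u"
  shows "\<exists>v. x v < y v \<and> unit_shift x v u \<in> base_points b \<and> unit_shift y u v \<in> base_points b"
proof -
  define D where "D = \<Inter>{W. tight b y W \<and> u \<in> W}"
  define Z where "Z = \<Union>{W. tight b x W \<and> u \<notin> W}"
  have "D \<in> {W. tight b y W \<and> u \<in> W}"
    unfolding D_def
    by (rule Inter_mem_Int_closed) (use base_points_tight_UNIV[OF y] tight_Un_Int[OF b y] in auto)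
  then have D: "tight b y D" "u \<in> D"
    by simp_all
  have "Z \<in> {W. tight b x W \<and> u \<notin> W}"
    unfolding Z_def
    by (rule Union_mem_Un_closed) (use tight_empty[OF b] tight_Un_Int[OF b x] in auto)
  then have Z: "tight b x Z" "u \<notin> Z"
    by simp_all
  have "\<exists>v \<in> D - Z. x v < y v"
  proof (rule ccontr)
    assume "\<not> ?thesis"
    then have "sum y (D - Z) < sum x (D - Z)"
      using u D(2) Z(2) by (intro sum_strict_mono_ex1) (auto simp: not_less)
    with base_points_sum_Diff_le[OF b x y D(1) Z(1)] show False
      by simp
  qed
  then obtain v where v: "v \<in> D" "v \<notin> Z" "x v < y v"
    by blast
  \<comment> \<open>An x-tight set avoiding u lies in Z, so misses v; a y-tight set containing u contains D, so v.\<close>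
  have "unit_shift x v u \<in> base_points b"
    by (rule unit_shift_in_base_points[OF b x]) (use v in \<open>auto simp: Z_def\<close>)
  moreover have "unit_shift y u v \<in> base_points b"
    by (rule unit_shift_in_base_points[OF b y]) (use v in \<open>auto simp: D_def\<close>)
  ultimately show ?thesis
    using v by blast
qed

lemma M_convex_exchange:
  assumes "M_convex K" and "x \<in> K" and "y \<in> K" and "y u < x u"
  shows "\<exists>v. x v < y v \<and> unit_shift x v u \<in> K \<and> unit_shift y u v \<in> K"
  using assms base_points_exchange unfolding M_convex_def by blast

lemma M_convex_sum_eq:
  assumes "M_convex K" and "x \<in> K" and "y \<in> K"
  shows "sum x UNIV = sum y UNIV"
  using assms base_points_tight_UNIV unfolding M_convex_def tight_def
  by (metis ereal.inject of_int_eq_iff)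

lemma dec_min_unit_shift_le:
  assumes m: "dec_min K m" and shift: "unit_shift m s t \<in> K"
  shows "m t \<le> m s + 1"
proof (rule ccontr)
  assume "\<not> m t \<le> m s + 1"
  then have steep: "m s + 2 \<le> m t"
    by simp
  have "(dec_vec (unit_shift m s t), dec_vec m) \<in> lexord {(x, y). x < y}"
  proof (rule dec_vec_lexord_less[where a = "m t"])
    show "unit_shift m s t z = m z" if "m t < unit_shift m s t z \<or> m t < m z" for z
      using that steep by (cases "z = s"; cases "z = t") (auto simp: unit_vec_def)
    have "{z. unit_shift m s t z = m t} = {z. m z = m t} - {t}"
      using steep by (auto simp: unit_vec_def)
    moreover have "card ({z. m z = m t} - {t}) < card {z. m z = m t}"
      by (rule card_Diff1_less) auto
    ultimately show "card {z. unit_shift m s t z = m t} < card {z. m z = m t}"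
      by (simp only:)
  qed
  with m shift show False
    unfolding dec_min_def by blast
qed

lemma dec_min_comp_bij:
  assumes "dec_min K m" and "bij \<sigma>" and "m \<circ> \<sigma> \<in> K"
  shows "dec_min K (m \<circ> \<sigma>)"
  using assms unfolding dec_min_def by (simp add: dec_vec_comp_bij)

lemma ex_less_if_sum_eq:
  fixes x y :: "'a::finite \<Rightarrow> 'b::{ordered_cancel_comm_monoid_add, linorder}"
  assumes "sum x UNIV = sum y UNIV" and "x \<noteq> y"
  shows "\<exists>u. y u < x u"
proof (rule ccontr)
  assume "\<nexists>u. y u < x u"
  then have le: "x u \<le> y u" for u
    by (simp add: not_less)
  obtain w where "x w \<noteq> y w"
    using assms(2) by auto
  with le have "x w < y w"
    by (simp add: order_less_le)
  then have "sum x UNIV < sum y UNIV"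
    by (intro sum_strict_mono_ex1) (auto simp: le)
  with assms(1) show False
    by simp
qed

lemma dec_min_elem_step_closer:
  assumes K: "M_convex K" and m: "dec_min K m" and m': "dec_min K m'" and "m \<noteq> m'"
  shows "\<exists>m1. elem_step K m m1 \<and> dec_min K m1 \<and> {w. m1 w \<noteq> m' w} \<subset> {w. m w \<noteq> m' w}"
proof -
  have in_K: "m \<in> K" "m' \<in> K"
    using m m' by (simp_all add: dec_min_def)
  obtain u where u: "m' u < m u"
    using ex_less_if_sum_eq[OF M_convex_sum_eq[OF K in_K] \<open>m \<noteq> m'\<close>] by blast
  then obtain v where v: "m v < m' v" and shift: "unit_shift m v u \<in> K"
    and shift': "unit_shift m' u v \<in> K"
    using M_convex_exchange[OF K in_K] by blast
  have "m u \<le> m v + 1"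
    by (rule dec_min_unit_shift_le[OF m shift])
  moreover have "m' v \<le> m' u + 1"
    by (rule dec_min_unit_shift_le[OF m' shift'])
  ultimately have uv: "m u = m v + 1" "m' u = m v"
    using u v by linarith+
  then have "u \<noteq> v"
    by auto
  define \<sigma> where "\<sigma> = id(u := v, v := u)"
  have swap: "unit_shift m v u = m \<circ> \<sigma>"
    using uv by (auto simp: \<sigma>_def unit_vec_def fun_eq_iff)
  have "bij \<sigma>"
    by (rule o_bij[of \<sigma>]) (auto simp: \<sigma>_def fun_eq_iff)
  have "elem_step K m (unit_shift m v u)"
    unfolding elem_step_def using m shift uv(1) by blast
  moreover have "dec_min K (unit_shift m v u)"
    unfolding swap by (rule dec_min_comp_bij[OF m \<open>bij \<sigma>\<close>]) (use shift swap in simp)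
  moreover have "{w. unit_shift m v u w \<noteq> m' w} \<subset> {w. m w \<noteq> m' w}"
  proof -
    have "w \<in> {w. m w \<noteq> m' w} - {u}" if "unit_shift m v u w \<noteq> m' w" for w
      using that v uv \<open>u \<noteq> v\<close> by (cases "w = u"; cases "w = v") (simp_all add: unit_vec_def)
    moreover have "u \<in> {w. m w \<noteq> m' w}"
      using u by simp
    ultimately show ?thesis
      by blast
  qed
  ultimately show ?thesis
    by blast
qed

lemma dec_min_reachable_by_elem_steps:
  assumes K: "M_convex K" and m: "dec_min K m" and m': "dec_min K m'"
  shows "\<exists>k \<le> card {w. m w \<noteq> m' w}. (elem_step K ^^ k) m m'"
  using m
proof (induction "card {w. m w \<noteq> m' w}" arbitrary: m rule: less_induct)
  case less
  show ?case
  proof (cases "m = m'")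
    case True
    then show ?thesis
      by (intro exI[of _ 0]) simp
  next
    case False
    then obtain m1 where step: "elem_step K m m1" and m1: "dec_min K m1"
      and closer: "{w. m1 w \<noteq> m' w} \<subset> {w. m w \<noteq> m' w}"
      using dec_min_elem_step_closer[OF K less.prems m'] by blast
    then have "card {w. m1 w \<noteq> m' w} < card {w. m w \<noteq> m' w}"
      by (simp add: psubset_card_mono)
    then obtain k where "k < card {w. m w \<noteq> m' w}" and "(elem_step K ^^ k) m1 m'"
      using less.hyps[OF _ m1] by (meson order_le_less_trans)
    then show ?thesis
      using relpowp_Suc_I2[of "elem_step K", OF step] by (intro exI[of _ "Suc k"]) auto
  qed
qed

theorem claim5p3:
  fixes K :: "('a::finite \<Rightarrow> int) set" and m :: "'a \<Rightarrow> int"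
  assumes "M_convex K" and "dec_min K m"
  shows "\<forall>m'. dec_min K m' \<longrightarrow> (\<exists>k \<le> card (UNIV :: 'a set). (elem_step K ^^ k) m m')"
proof (intro allI impI)
  fix m'
  assume "dec_min K m'"
  then obtain k where "k \<le> card {w. m w \<noteq> m' w}" and "(elem_step K ^^ k) m m'"
    using dec_min_reachable_by_elem_steps assms by blast
  moreover have "card {w. m w \<noteq> m' w} \<le> card (UNIV :: 'a set)"
    by (rule card_mono) auto
  ultimately show "\<exists>k \<le> card (UNIV :: 'a set). (elem_step K ^^ k) m m'"
    by (meson order_trans)
qed

end
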